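(* Let $\mathbf{M}\in\mathbb{R}^{d_L\times d_0}$, $k\ge\min\{d_0,d_L\}$, and $$\mathcal{L}(\mathbf{L},\mathbf{R}) = \|\mathbf{M}-\mathbf{L}\mathbf{R}^\top\|_F^2,\qquad \mathbf{L}\in\mathbb{R}^{d_L\times k},\ \mathbf{R}\in\mathbb{R}^{d_0\times k}.$$ If $(\mathbf{L},\mathbf{R})$ satisfies $\mathbf{M}=\mathbf{L}\mathbf{R}^\top$, then $$\lambda_{\max}(\nabla^2\mathcal{L}(\mathbf{L},\mathbf{R})) = 2\big(\sigma_{\max}(\mathbf{L})^2+\sigma_{\max}(\mathbf{R})^2\big).$$
   Context: $\nabla^2\mathcal{L}(\mathbf{L},\mathbf{R})$ is the Hessian of $\mathcal{L}$ viewed as a function of the vector of all entries of $\mathbf{L}$ and $\mathbf{R}$; $\lambda_{\max}$ is its largest eigenvalue and $\sigma_{\max}$ denotes the largest singular value. *)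

theory Defs
  imports "HOL-Analysis.Analysis"
begin

definition frob_norm :: "real^'n^'m \<Rightarrow> real" where
  "frob_norm A = sqrt (\<Sum>i\<in>UNIV. \<Sum>j\<in>UNIV. (A $ i $ j)^2)"

definition is_eigenvalue :: "real^'n^'n \<Rightarrow> real \<Rightarrow> bool" where
  "is_eigenvalue A l \<longleftrightarrow> (\<exists>v. v \<noteq> 0 \<and> A *v v = l *\<^sub>R v)"

definition lambda_max :: "real^'n^'n \<Rightarrow> real" where
  "lambda_max A = Max {l. is_eigenvalue A l}"

definition sigma_max :: "real^'n^'m \<Rightarrow> real" where
  "sigma_max A = sqrt (lambda_max (transpose A ** A))"

definition partial :: "(real^'i \<Rightarrow> real) \<Rightarrow> 'i \<Rightarrow> real^'i \<Rightarrow> real" where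
  "partial f i x = deriv (\<lambda>t. f (x + t *\<^sub>R axis i 1)) 0"

definition hessian :: "(real^'i \<Rightarrow> real) \<Rightarrow> real^'i \<Rightarrow> real^'i^'i" where
  "hessian f x = (\<chi> i j. partial (\<lambda>y. partial f j y) i x)"

definition pack :: "real^'k^'m \<Rightarrow> real^'k^'n \<Rightarrow> real^(('m \<times> 'k) + ('n \<times> 'k))" where
  "pack L R = (\<chi> p. case p of Inl (i, j) \<Rightarrow> L $ i $ j | Inr (i, j) \<Rightarrow> R $ i $ j)"

definition L_of :: "real^(('m \<times> 'k) + ('n::finite \<times> 'k)) \<Rightarrow> real^'k^'m" where
  "L_of z = (\<chi> i j. z $ Inl (i, j))"

definition R_of :: "real^(('m::finite \<times> 'k) + ('n \<times> 'k)) \<Rightarrow> real^'k^'n" where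
  "R_of z = (\<chi> i j. z $ Inr (i, j))"

definition loss :: "real^'n::finite^'m::finite \<Rightarrow> real^(('m \<times> 'k::finite) + ('n \<times> 'k)) \<Rightarrow> real" where
  "loss M z = (frob_norm (M - L_of z ** transpose (R_of z)))^2"

end

theory Submission
  imports Defs
begin

text \<open>At an exact factorisation the residual vanishes, so the Hessian of the loss is twice
  the Gram form of the derivative \<open>D(\<Delta>L, \<Delta>R) = \<Delta>L R\<^sup>T + L \<Delta>R\<^sup>T\<close> of the product map:
  \<open>v \<bullet> H v = 2 \<parallel>D v\<parallel>\<^sup>2\<close>. Since \<open>\<parallel>\<Delta>L R\<^sup>T\<parallel> \<le> \<sigma>(R) \<parallel>\<Delta>L\<parallel>\<close> and \<open>\<parallel>L \<Delta>R\<^sup>T\<parallel> \<le> \<sigma>(L) \<parallel>\<Delta>R\<parallel>\<close>,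
  Cauchy-Schwarz gives \<open>\<parallel>D v\<parallel>\<^sup>2 \<le> (\<sigma>(L)\<^sup>2 + \<sigma>(R)\<^sup>2) \<parallel>v\<parallel>\<^sup>2\<close>. Equality holds for the rank-one
  direction that moves L along \<open>a z\<^sup>T\<close> and R along \<open>b y\<^sup>T\<close>, where y, z are top right singular
  vectors of L, R and a, b are the directions of \<open>L y\<close>, \<open>R z\<close>: both terms of D then equal
  multiples of \<open>a b\<^sup>T\<close>. The largest eigenvalue of a symmetric matrix is the maximum of its
  Rayleigh quotient, which is attained on the compact unit sphere.\<close>

section \<open>Largest eigenvalue of a symmetric matrix\<close>

lemma symmetric_inner_mult_vec:
  fixes A :: "real^'n^'n"
  assumes "transpose A = A"
  shows "x \<bullet> (A *v y) = (A *v x) \<bullet> y"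
  by (metis assms dot_lmul_matrix transpose_matrix_vector)

lemma Rayleigh_max_attained:
  fixes A :: "real^'n^'n"
  shows "\<exists>v. norm v = 1 \<and> (\<forall>x. x \<bullet> (A *v x) \<le> (v \<bullet> (A *v v)) * (norm x)^2)"
proof -
  let ?f = "\<lambda>x::real^'n. x \<bullet> (A *v x)"
  have "continuous_on (sphere 0 1) ?f"
    by (intro continuous_on_inner continuous_on_id linear_continuous_on
        matrix_vector_mul_bounded_linear)
  moreover have "sphere (0::real^'n) 1 \<noteq> {}"
    by (metis empty_iff mem_sphere_0 norm_axis_1)
  ultimately obtain v where "v \<in> sphere 0 1" and max: "\<And>y. y \<in> sphere 0 1 \<Longrightarrow> ?f y \<le> ?f v"
    using continuous_attains_sup[OF compact_sphere] by blast
  then have v: "norm v = 1" by simp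
  have "?f x \<le> ?f v * (norm x)^2" for x
  proof (cases "x = 0")
    case False
    have "?f x = (norm x)^2 * ?f (x /\<^sub>R norm x)"
      using False by (simp add: matrix_vector_mult_scaleR power2_eq_square field_simps)
    also have "\<dots> \<le> (norm x)^2 * ?f v"
      using False by (intro mult_left_mono max) simp_all
    finally show ?thesis by (simp add: mult.commute)
  qed simp
  with v show ?thesis by blast
qed

lemma linear_coeff_zero_if_quadratic_nonpos:
  fixes a c :: real
  assumes "\<And>t. t * a + t^2 * c \<le> 0"
  shows "a = 0"
proof -
  define d where "d = \<bar>c\<bar> + 1"
  have "d > 0" "d + c > 0" by (auto simp: d_def)
  define t where "t = a / d"
  have "t * a + t^2 * c = a^2 * (d + c) / d^2"
    using \<open>d > 0\<close> by (simp add: t_def field_simps power2_eq_square)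
  then have "a^2 * (d + c) \<le> 0"
    using assms[of t] \<open>d > 0\<close> by (simp add: divide_le_0_iff)
  then show ?thesis
    using \<open>d + c > 0\<close> by (simp add: mult_le_0_iff)
qed

text \<open>A maximiser of the Rayleigh quotient is an eigenvector: perturbing it along the
  residual b = A v - \<mu> v changes the Rayleigh form to first order by 2 t (b \<bullet> b).\<close>
lemma Rayleigh_maximizer_eigenvector:
  fixes A :: "real^'n^'n"
  assumes sym: "transpose A = A" and v: "norm v = 1"
    and max: "\<And>x. x \<bullet> (A *v x) \<le> (v \<bullet> (A *v v)) * (norm x)^2"
  shows "A *v v = (v \<bullet> (A *v v)) *\<^sub>R v"
proof -
  define \<mu> where "\<mu> = v \<bullet> (A *v v)"
  define b where "b = A *v v - \<mu> *\<^sub>R v"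
  have vv: "v \<bullet> v = 1" using v by (simp add: dot_square_norm)
  have "t * (2 * (b \<bullet> b)) + t^2 * (b \<bullet> (A *v b) - \<mu> * (b \<bullet> b)) \<le> 0" for t
  proof -
    have "(v + t *\<^sub>R b) \<bullet> (A *v (v + t *\<^sub>R b)) - \<mu> * (norm (v + t *\<^sub>R b))^2
        = t * (2 * (b \<bullet> b)) + t^2 * (b \<bullet> (A *v b) - \<mu> * (b \<bullet> b))"
      using symmetric_inner_mult_vec[OF sym, of v b] vv
      unfolding power2_norm_eq_inner
      by (simp add: b_def \<mu>_def matrix_vector_right_distrib
          matrix_vector_mult_scaleR inner_add_left inner_add_right inner_diff_left
          inner_diff_right inner_commute algebra_simps power2_eq_square)
    then show ?thesis using max[of "v + t *\<^sub>R b"] by (simp add: \<mu>_def)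
  qed
  then have "2 * (b \<bullet> b) = 0"
    by (rule linear_coeff_zero_if_quadratic_nonpos)
  then show ?thesis by (simp add: b_def \<mu>_def)
qed

lemma finite_eigenvalues_symmetric:
  fixes A :: "real^'n^'n"
  assumes sym: "transpose A = A"
  shows "finite {l. is_eigenvalue A l}"
proof (rule ccontr)
  assume "infinite {l. is_eigenvalue A l}"
  then obtain T where T: "finite T" "card T = CARD('n) + 1" "T \<subseteq> {l. is_eigenvalue A l}"
    using infinite_arbitrarily_large by blast
  then have "\<forall>l\<in>T. \<exists>v. v \<noteq> 0 \<and> A *v v = l *\<^sub>R v"
    by (auto simp: is_eigenvalue_def)
  then obtain g where g: "\<And>l. l \<in> T \<Longrightarrow> g l \<noteq> 0 \<and> A *v g l = l *\<^sub>R g l"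
    by metis
  have inj: "inj_on g T"
  proof (rule inj_onI)
    fix l m assume "l \<in> T" "m \<in> T" "g l = g m"
    then have "l *\<^sub>R g l = m *\<^sub>R g l" using g by metis
    then show "l = m" using g[OF \<open>l \<in> T\<close>] by simp
  qed
  have "pairwise orthogonal (g ` T)"
  proof (clarsimp simp: pairwise_def orthogonal_def)
    fix l m assume lm: "l \<in> T" "m \<in> T" "g l \<noteq> g m"
    have "l * (g l \<bullet> g m) = g l \<bullet> (A *v g m)"
      using g[OF lm(1)] symmetric_inner_mult_vec[OF sym, of "g l" "g m"] by simp
    also have "\<dots> = m * (g l \<bullet> g m)" using g[OF lm(2)] by simp
    finally show "g l \<bullet> g m = 0" using lm by auto
  qed
  moreover have "0 \<notin> g ` T" using g by force
  ultimately have "independent (g ` T)" using pairwise_orthogonal_independent by blast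
  then have "card (g ` T) \<le> CARD('n)"
    using independent_bound by fastforce
  with T card_image[OF inj] show False by simp
qed

lemma lambda_max_symmetric:
  fixes A :: "real^'n^'n"
  assumes sym: "transpose A = A"
  shows "\<exists>v. norm v = 1 \<and> v \<bullet> (A *v v) = lambda_max A"
    and "x \<bullet> (A *v x) \<le> lambda_max A * (norm x)^2"
proof -
  obtain v where v: "norm v = 1" and max: "\<And>x. x \<bullet> (A *v x) \<le> (v \<bullet> (A *v v)) * (norm x)^2"
    using Rayleigh_max_attained by blast
  have "lambda_max A = v \<bullet> (A *v v)"
    unfolding lambda_max_def
  proof (rule Max_eqI[OF finite_eigenvalues_symmetric[OF sym]])
    have "v \<noteq> 0" using v by auto
    then show "v \<bullet> (A *v v) \<in> {l. is_eigenvalue A l}"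
      using Rayleigh_maximizer_eigenvector[OF sym v max] by (auto simp: is_eigenvalue_def)
  next
    fix l assume "l \<in> {l. is_eigenvalue A l}"
    then obtain x where x: "x \<noteq> 0" "A *v x = l *\<^sub>R x" by (auto simp: is_eigenvalue_def)
    have "l * (norm x)^2 = x \<bullet> (A *v x)" using x by (simp add: power2_norm_eq_inner)
    also have "\<dots> \<le> (v \<bullet> (A *v v)) * (norm x)^2" by (rule max)
    finally show "l \<le> v \<bullet> (A *v v)" using x by simp
  qed
  then show "\<exists>v. norm v = 1 \<and> v \<bullet> (A *v v) = lambda_max A"
    and "x \<bullet> (A *v x) \<le> lambda_max A * (norm x)^2"
    using v max by auto
qed

lemma lambda_max_eqI:
  fixes A :: "real^'n^'n"
  assumes sym: "transpose A = A"
    and le: "\<And>x. x \<bullet> (A *v x) \<le> \<mu> * (norm x)^2"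
    and "w \<noteq> 0" and ge: "\<mu> * (norm w)^2 \<le> w \<bullet> (A *v w)"
  shows "lambda_max A = \<mu>"
proof (rule antisym)
  obtain v where "norm v = 1" "v \<bullet> (A *v v) = lambda_max A"
    using lambda_max_symmetric(1)[OF sym] by blast
  then show "lambda_max A \<le> \<mu>" using le[of v] by simp
  have "\<mu> * (norm w)^2 \<le> lambda_max A * (norm w)^2"
    using ge lambda_max_symmetric(2)[OF sym, of w] by linarith
  then show "\<mu> \<le> lambda_max A" using \<open>w \<noteq> 0\<close> by simp
qed

section \<open>Largest singular value\<close>

lemma gram_quadratic_form:
  fixes A :: "real^'n^'m"
  shows "x \<bullet> ((transpose A ** A) *v x) = (norm (A *v x))^2"
proof -
  have "x \<bullet> ((transpose A ** A) *v x) = ((A *v x) v* A) \<bullet> x"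
    by (simp flip: matrix_vector_mul_assoc add: inner_commute)
  also have "\<dots> = (A *v x) \<bullet> (A *v x)" by (simp add: dot_lmul_matrix)
  finally show ?thesis by (simp add: power2_norm_eq_inner)
qed

lemma
  fixes A :: "real^'n^'m"
  shows norm_mult_vec_le_sigma_max: "norm (A *v x) \<le> sigma_max A * norm x"
    and sigma_max_attained: "\<exists>v. norm v = 1 \<and> norm (A *v v) = sigma_max A"
proof -
  have sym: "transpose (transpose A ** A) = transpose A ** A"
    by (simp add: matrix_transpose_mul)
  obtain v where v: "norm v = 1" "v \<bullet> ((transpose A ** A) *v v) = lambda_max (transpose A ** A)"
    using lambda_max_symmetric(1)[OF sym] by blast
  then have v_sq: "(norm (A *v v))^2 = lambda_max (transpose A ** A)"
    by (simp only: gram_quadratic_form)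
  then have nonneg: "lambda_max (transpose A ** A) \<ge> 0"
    using zero_le_power2 by metis
  then have sq: "(sigma_max A)^2 = lambda_max (transpose A ** A)"
    unfolding sigma_max_def by (rule real_sqrt_pow2)
  have "(norm (A *v x))^2 \<le> (sigma_max A * norm x)^2"
    using lambda_max_symmetric(2)[OF sym, of x]
    by (simp only: sq gram_quadratic_form power_mult_distrib)
  then show "norm (A *v x) \<le> sigma_max A * norm x"
    by (rule power2_le_imp_le) (simp add: sigma_max_def nonneg)
  show "\<exists>v. norm v = 1 \<and> norm (A *v v) = sigma_max A"
  proof (intro exI conjI)
    show "norm (A *v v) = sigma_max A"
      using v_sq by (simp add: sigma_max_def real_sqrt_unique)
  qed (fact v(1))
qed

lemma sigma_max_nonneg: "sigma_max A \<ge> 0"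
  by (metis norm_ge_zero sigma_max_attained)

lemma norm_sq_rows:
  fixes A :: "'a::real_inner^'n"
  shows "(norm A)^2 = (\<Sum>i\<in>UNIV. (norm (A $ i))^2)"
  by (simp add: power2_norm_eq_inner inner_vec_def)

lemma norm_transpose:
  fixes A :: "real^'n^'m"
  shows "norm (transpose A) = norm A"
  by (simp add: norm_eq_sqrt_inner inner_vec_def transpose_def sum.swap[of _ "UNIV :: 'm set"])

lemma norm_mult_transpose_le:
  fixes A :: "real^'k^'m" and B :: "real^'k^'n"
  shows "norm (A ** transpose B) \<le> sigma_max B * norm A"
proof (rule power2_le_imp_le)
  have "(norm (A ** transpose B))^2 = (\<Sum>i\<in>UNIV. (norm (B *v (A $ i)))^2)"
    by (simp add: norm_sq_rows matrix_matrix_mult_def matrix_vector_mult_def transpose_def mult.commute)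
  also have "\<dots> \<le> (\<Sum>i\<in>UNIV. (sigma_max B * norm (A $ i))^2)"
    by (intro sum_mono power_mono norm_mult_vec_le_sigma_max) simp
  also have "\<dots> = (sigma_max B * norm A)^2"
    by (simp add: norm_sq_rows power_mult_distrib sum_distrib_left)
  finally show "(norm (A ** transpose B))^2 \<le> (sigma_max B * norm A)^2" .
qed (simp add: sigma_max_nonneg)

definition outer_prod :: "real^'m \<Rightarrow> real^'n \<Rightarrow> real^'n^'m"
  where "outer_prod a b = (\<chi> i j. a $ i * b $ j)"

lemma outer_prod_mult_transpose: "outer_prod a b ** transpose B = outer_prod a (B *v b)"
  by (simp add: vec_eq_iff outer_prod_def matrix_matrix_mult_def matrix_vector_mult_def
      transpose_def sum_distrib_left mult_ac)

lemma mult_transpose_outer_prod: "A ** transpose (outer_prod b c) = outer_prod (A *v c) b"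
  by (simp add: vec_eq_iff outer_prod_def matrix_matrix_mult_def matrix_vector_mult_def
      transpose_def sum_distrib_left mult_ac)

lemma outer_prod_scaleR_left: "outer_prod (c *\<^sub>R a) b = c *\<^sub>R outer_prod a b"
  by (simp add: vec_eq_iff outer_prod_def)

lemma outer_prod_scaleR_right: "outer_prod a (c *\<^sub>R b) = c *\<^sub>R outer_prod a b"
  by (simp add: vec_eq_iff outer_prod_def mult.left_commute)

lemma norm_outer_prod: "norm (outer_prod a b) = norm a * norm b"
proof -
  have "(norm (outer_prod a b))^2 = (norm a * norm b)^2"
  proof -
    have "outer_prod a b $ i = a $ i *\<^sub>R b" for i
      by (simp add: vec_eq_iff outer_prod_def)
    then show ?thesis
      by (simp add: norm_sq_rows[of "outer_prod a b"] norm_sq_rows[of a] power_mult_distrib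
          sum_distrib_right)
  qed
  then show ?thesis by (simp add: power2_eq_iff_nonneg)
qed

lemma exists_unit_direction: "\<exists>a::real^'n. norm a = 1 \<and> u = norm u *\<^sub>R a"
proof (cases "u = 0")
  case True
  then show ?thesis by (intro exI[of _ "axis undefined 1"]) (simp add: norm_axis_1)
next
  case False
  then show ?thesis by (intro exI[of _ "u /\<^sub>R norm u"]) simp
qed

section \<open>Hessian of the loss at an exact factorisation\<close>

lemma inner_quadratic_curves_deriv:
  fixes p d q p' d' q' :: "'a::real_inner"
  shows "((\<lambda>t. (p + t *\<^sub>R d + t^2 *\<^sub>R q) \<bullet> (p' + t *\<^sub>R d' + t^2 *\<^sub>R q'))
          has_real_derivative (d \<bullet> p' + p \<bullet> d')) (at 0)"
proof -
  have "(\<lambda>t. (p + t *\<^sub>R d + t^2 *\<^sub>R q) \<bullet> (p' + t *\<^sub>R d' + t^2 *\<^sub>R q'))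
      = (\<lambda>t. p \<bullet> p' + t * (d \<bullet> p' + p \<bullet> d') + t^2 * (q \<bullet> p' + d \<bullet> d' + p \<bullet> q')
              + t^3 * (q \<bullet> d' + d \<bullet> q') + t^4 * (q \<bullet> q'))"
    by (simp add: inner_add_left inner_add_right algebra_simps power2_eq_square
        power3_eq_cube power4_eq_xxxx)
  moreover have "((\<lambda>t. p \<bullet> p' + t * (d \<bullet> p' + p \<bullet> d') + t^2 * (q \<bullet> p' + d \<bullet> d' + p \<bullet> q')
              + t^3 * (q \<bullet> d' + d \<bullet> q') + t^4 * (q \<bullet> q'))
          has_real_derivative (d \<bullet> p' + p \<bullet> d')) (at 0)"
    by (rule derivative_eq_intros refl | simp)+
  ultimately show ?thesis by simp
qed

lemma partial_eqI:
  assumes "((\<lambda>t. f (x + t *\<^sub>R axis i 1)) has_real_derivative D) (at 0)"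
  shows "partial f i x = D"
  unfolding partial_def using DERIV_imp_deriv[OF assms] .

lemma frob_norm_eq_norm: "frob_norm A = norm A"
  by (simp add: frob_norm_def norm_eq_sqrt_inner inner_vec_def power2_eq_square)

definition product_deriv ::
    "real^(('m::finite \<times> 'k::finite) + ('n::finite \<times> 'k)) \<Rightarrow> real^(('m \<times> 'k) + ('n \<times> 'k)) \<Rightarrow> real^'n^'m"
  where "product_deriv z w = L_of w ** transpose (R_of z) + L_of z ** transpose (R_of w)"

lemma residual_line:
  fixes M :: "real^'n::finite^'m::finite" and y w :: "real^(('m \<times> 'k::finite) + ('n \<times> 'k))"
  shows "M - L_of (y + t *\<^sub>R w) ** transpose (R_of (y + t *\<^sub>R w))
      = (M - L_of y ** transpose (R_of y)) + t *\<^sub>R (- product_deriv y w)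
        + t^2 *\<^sub>R (- (L_of w ** transpose (R_of w)))"
  by (simp add: vec_eq_iff product_deriv_def matrix_matrix_mult_def transpose_def L_of_def R_of_def
      algebra_simps sum.distrib sum_distrib_left power2_eq_square sum_subtractf)

lemma product_deriv_line:
  fixes y w v :: "real^(('m::finite \<times> 'k::finite) + ('n::finite \<times> 'k))"
  shows "product_deriv (y + t *\<^sub>R w) v = product_deriv y v + t *\<^sub>R product_deriv w v"
  by (simp add: vec_eq_iff product_deriv_def matrix_matrix_mult_def transpose_def L_of_def R_of_def
      algebra_simps sum.distrib sum_distrib_left)

lemma linear_product_deriv:
  fixes z :: "real^(('m::finite \<times> 'k::finite) + ('n::finite \<times> 'k))"
  shows "linear (product_deriv z)"
  by (rule linearI)
    (simp_all add: vec_eq_iff product_deriv_def matrix_matrix_mult_def transpose_def L_of_def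
      R_of_def algebra_simps sum.distrib sum_distrib_left)

lemma partial_loss:
  fixes M :: "real^'n::finite^'m::finite" and y :: "real^(('m \<times> 'k::finite) + ('n \<times> 'k))"
  shows "partial (loss M) j y
      = - 2 * ((M - L_of y ** transpose (R_of y)) \<bullet> product_deriv y (axis j 1))"
proof (rule partial_eqI)
  let ?E = "M - L_of y ** transpose (R_of y)" and ?D = "product_deriv y (axis j 1)"
    and ?Q = "L_of (axis j 1 :: real^(('m \<times> 'k) + ('n \<times> 'k))) ** transpose (R_of (axis j 1))"
  have "((\<lambda>t. (?E + t *\<^sub>R (- ?D) + t^2 *\<^sub>R (- ?Q)) \<bullet> (?E + t *\<^sub>R (- ?D) + t^2 *\<^sub>R (- ?Q)))
      has_real_derivative (- ?D) \<bullet> ?E + ?E \<bullet> (- ?D)) (at 0)"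
    by (rule inner_quadratic_curves_deriv)
  moreover have "(- ?D) \<bullet> ?E + ?E \<bullet> (- ?D) = - 2 * (?E \<bullet> ?D)"
    by (simp add: inner_commute)
  ultimately show "((\<lambda>t. loss M (y + t *\<^sub>R axis j 1)) has_real_derivative - 2 * (?E \<bullet> ?D)) (at 0)"
    by (simp only: loss_def frob_norm_eq_norm residual_line power2_norm_eq_inner)
qed

lemma hessian_loss_nth:
  fixes M :: "real^'n::finite^'m::finite" and x :: "real^(('m \<times> 'k::finite) + ('n \<times> 'k))"
  assumes exact: "M = L_of x ** transpose (R_of x)"
  shows "hessian (loss M) x $ i $ j = 2 * (product_deriv x (axis i 1) \<bullet> product_deriv x (axis j 1))"
proof -
  let ?e = "axis i 1 :: real^(('m \<times> 'k) + ('n \<times> 'k))" and ?f = "axis j 1 :: real^(('m \<times> 'k) + ('n \<times> 'k))"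
  let ?Di = "product_deriv x ?e" and ?Dj = "product_deriv x ?f" and ?Q = "L_of ?e ** transpose (R_of ?e)"
  have "((\<lambda>t. (0 + t *\<^sub>R (- ?Di) + t^2 *\<^sub>R (- ?Q)) \<bullet> (?Dj + t *\<^sub>R product_deriv ?e ?f + t^2 *\<^sub>R 0))
      has_real_derivative (- ?Di) \<bullet> ?Dj + 0 \<bullet> product_deriv ?e ?f) (at 0)"
    by (rule inner_quadratic_curves_deriv)
  then have "((\<lambda>t. - 2 * ((0 + t *\<^sub>R (- ?Di) + t^2 *\<^sub>R (- ?Q))
                           \<bullet> (?Dj + t *\<^sub>R product_deriv ?e ?f + t^2 *\<^sub>R 0)))
      has_real_derivative - 2 * ((- ?Di) \<bullet> ?Dj + 0 \<bullet> product_deriv ?e ?f)) (at 0)"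
    by (rule DERIV_cmult)
  then have "((\<lambda>t. partial (loss M) j (x + t *\<^sub>R ?e)) has_real_derivative 2 * (?Di \<bullet> ?Dj)) (at 0)"
    by (simp add: partial_loss residual_line product_deriv_line exact)
  then show ?thesis
    unfolding hessian_def by (simp add: partial_eqI)
qed

lemma hessian_loss_symmetric:
  fixes M :: "real^'n::finite^'m::finite" and x :: "real^(('m \<times> 'k::finite) + ('n \<times> 'k))"
  assumes "M = L_of x ** transpose (R_of x)"
  shows "transpose (hessian (loss M) x) = hessian (loss M) x"
  by (simp add: vec_eq_iff transpose_def hessian_loss_nth[OF assms] inner_commute)

lemma product_deriv_basis_expansion:
  fixes z v :: "real^(('m::finite \<times> 'k::finite) + ('n::finite \<times> 'k))"
  shows "product_deriv z v = (\<Sum>i\<in>UNIV. v $ i *\<^sub>R product_deriv z (axis i 1))"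
proof -
  have "product_deriv z v = product_deriv z (\<Sum>i\<in>UNIV. v $ i *\<^sub>R axis i 1)"
    using basis_expansion[of v] by (simp add: scalar_mult_eq_scaleR)
  then show ?thesis
    by (simp add: linear_sum[OF linear_product_deriv] linear_scale[OF linear_product_deriv])
qed

lemma hessian_loss_quadratic_form:
  fixes M :: "real^'n::finite^'m::finite" and x v :: "real^(('m \<times> 'k::finite) + ('n \<times> 'k))"
  assumes "M = L_of x ** transpose (R_of x)"
  shows "v \<bullet> (hessian (loss M) x *v v) = 2 * (norm (product_deriv x v))^2"
proof -
  let ?D = "\<lambda>i. product_deriv x (axis i 1)"
  have "v \<bullet> (hessian (loss M) x *v v) = (\<Sum>i\<in>UNIV. \<Sum>j\<in>UNIV. 2 * (v $ i * v $ j * (?D i \<bullet> ?D j)))"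
    by (simp add: inner_vec_def matrix_vector_mult_def hessian_loss_nth[OF assms]
        sum_distrib_left mult_ac)
  also have "\<dots> = 2 * ((\<Sum>i\<in>UNIV. v $ i *\<^sub>R ?D i) \<bullet> (\<Sum>j\<in>UNIV. v $ j *\<^sub>R ?D j))"
    by (simp add: inner_sum_left inner_sum_right sum_distrib_left inner_commute mult_ac)
  finally show ?thesis
    by (simp flip: product_deriv_basis_expansion add: power2_norm_eq_inner)
qed

section \<open>Extremal directions of the derivative of the product\<close>

lemma L_of_pack: "L_of (pack L R) = L"
  by (simp add: vec_eq_iff L_of_def pack_def)

lemma R_of_pack: "R_of (pack L R) = R"
  by (simp add: vec_eq_iff R_of_def pack_def)

lemma norm_pack_sq:
  fixes z :: "real^(('m::finite \<times> 'k::finite) + ('n::finite \<times> 'k))"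
  shows "(norm z)^2 = (norm (L_of z))^2 + (norm (R_of z))^2"
  unfolding power2_norm_eq_inner inner_vec_def
  by (simp flip: UNIV_Plus_UNIV add: sum.Plus sum.cartesian_product L_of_def R_of_def)

lemma product_deriv_pack:
  "product_deriv (pack L R) w = L_of w ** transpose R + L ** transpose (R_of w)"
  by (simp add: product_deriv_def L_of_pack R_of_pack)

lemma norm_product_deriv_pack_le:
  fixes L :: "real^'k::finite^'m::finite" and R :: "real^'k^'n::finite"
    and w :: "real^(('m \<times> 'k) + ('n \<times> 'k))"
  shows "(norm (product_deriv (pack L R) w))^2 \<le> ((sigma_max L)^2 + (sigma_max R)^2) * (norm w)^2"
proof -
  let ?a = "norm (L_of w)" and ?b = "norm (R_of w)"
  have "norm (L ** transpose (R_of w)) = norm (R_of w ** transpose L)"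
    by (metis matrix_transpose_mul norm_transpose transpose_transpose)
  then have "norm (product_deriv (pack L R) w) \<le> sigma_max R * ?a + sigma_max L * ?b"
    unfolding product_deriv_pack
    by (metis add_mono norm_mult_transpose_le norm_triangle_le)
  then have "(norm (product_deriv (pack L R) w))^2 \<le> (sigma_max R * ?a + sigma_max L * ?b)^2"
    by (simp add: power_mono)
  also have "\<dots> \<le> (sigma_max R * ?a + sigma_max L * ?b)^2 + (sigma_max R * ?b - sigma_max L * ?a)^2"
    by simp
  also have "\<dots> = ((sigma_max L)^2 + (sigma_max R)^2) * (?a^2 + ?b^2)"
    by (simp add: algebra_simps power2_eq_square)
  finally show ?thesis by (simp add: norm_pack_sq)
qed

lemma product_deriv_pack_extremal:
  fixes L :: "real^'k::finite^'m::finite" and R :: "real^'k^'n::finite"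
  shows "\<exists>w :: real^(('m \<times> 'k) + ('n \<times> 'k)). w \<noteq> 0 \<and>
           ((sigma_max L)^2 + (sigma_max R)^2) * (norm w)^2 \<le> (norm (product_deriv (pack L R) w))^2"
proof (cases "(sigma_max L)^2 + (sigma_max R)^2 = 0")
  case True
  then show ?thesis by (intro exI[of _ "axis undefined 1"]) (simp add: norm_axis_1)
next
  case False
  define s where "s = (sigma_max L)^2 + (sigma_max R)^2"
  obtain y where y: "norm y = 1" "norm (L *v y) = sigma_max L"
    using sigma_max_attained by blast
  obtain z where z: "norm z = 1" "norm (R *v z) = sigma_max R"
    using sigma_max_attained by blast
  obtain a where a: "norm a = 1" "L *v y = sigma_max L *\<^sub>R a"
    using exists_unit_direction[of "L *v y"] y(2) by metis
  obtain b where b: "norm b = 1" "R *v z = sigma_max R *\<^sub>R b"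
    using exists_unit_direction[of "R *v z"] z(2) by metis
  define w :: "real^(('m \<times> 'k) + ('n \<times> 'k))"
    where "w = pack (sigma_max R *\<^sub>R outer_prod a z) (sigma_max L *\<^sub>R outer_prod b y)"
  have "product_deriv (pack L R) w = s *\<^sub>R outer_prod a b"
    by (simp add: w_def s_def product_deriv_pack L_of_pack R_of_pack transpose_scalar
        outer_prod_mult_transpose mult_transpose_outer_prod matrix_scalar_ac
        scalar_matrix_assoc[symmetric] scaleR_matrix_vector_assoc[symmetric]
        outer_prod_scaleR_left outer_prod_scaleR_right a(2) b(2)
        algebra_simps power2_eq_square)
  then have "(norm (product_deriv (pack L R) w))^2 = s^2"
    by (simp add: norm_outer_prod a(1) b(1))
  moreover have "(norm w)^2 = s"
    by (simp add: w_def s_def norm_pack_sq L_of_pack R_of_pack norm_outer_prod a(1) b(1) y(1) z(1)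
        power_mult_distrib)
  ultimately show ?thesis
    using False unfolding s_def by (intro exI[of _ w]) (auto simp: power2_eq_square)
qed

theorem corollary1:
  fixes M :: "real^'n^'m" and L :: "real^'k^'m" and R :: "real^'k^'n"
  assumes "CARD('k) \<ge> min CARD('n) CARD('m)"
    and "M = L ** transpose R"
  shows "lambda_max (hessian (loss M) (pack L R :: real^(('m \<times> 'k) + ('n \<times> 'k))))
           = 2 * ((sigma_max L)^2 + (sigma_max R)^2)"
proof -
  let ?x = "pack L R :: real^(('m \<times> 'k) + ('n \<times> 'k))"
  have exact: "M = L_of ?x ** transpose (R_of ?x)"
    using assms(2) by (simp add: L_of_pack R_of_pack)
  let ?H = "hessian (loss M) ?x" and ?s = "(sigma_max L)^2 + (sigma_max R)^2"
  have upper: "v \<bullet> (?H *v v) \<le> 2 * ?s * (norm v)^2" for v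
    unfolding hessian_loss_quadratic_form[OF exact] mult.assoc
    using norm_product_deriv_pack_le[of L R v] by linarith
  obtain w where w: "w \<noteq> 0" "?s * (norm w)^2 \<le> (norm (product_deriv ?x w))^2"
    using product_deriv_pack_extremal by blast
  have lower: "2 * ?s * (norm w)^2 \<le> w \<bullet> (?H *v w)"
    unfolding hessian_loss_quadratic_form[OF exact] mult.assoc using w(2) by linarith
  show ?thesis
    by (rule lambda_max_eqI[OF hessian_loss_symmetric[OF exact] upper w(1) lower])
qed

end
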